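(* Let $\mathbb{H}$ be a reproducing kernel Hilbert space with inner product $\langle\cdot,\cdot\rangle$ and feature map $\phi$, and let $(X,A,Y)$ be jointly distributed real-valued $A,Y$ with finite second moments such that $\mathbb{E}[Y\mid X]=\langle y,\phi(X)\rangle$ and $\mathbb{E}[A\mid X]=\langle a,\phi(X)\rangle$ for some $y,a\in\mathbb{H}$, with $\operatorname{Var}\mathbb{E}[A\mid X]>0$. Then for every (possibly randomized) representation $Z=g(X)$ with $\operatorname{Var}\mathbb{E}[A\mid Z]=0$, $$\operatorname{Var}\mathbb{E}[Y\mid Z]\le\operatorname{Var}\mathbb{E}[Y\mid X]-\frac{\operatorname{Cov}^2(\mathbb{E}[Y\mid X],\mathbb{E}[A\mid X])}{\operatorname{Var}\mathbb{E}[A\mid X]}.$$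
   Context: A (possibly randomized) representation is $Z=g(X,S)$ for a measurable $g$ and auxiliary randomness $S$ independent of $(X,A,Y)$. $\phi(X)$ is assumed to have finite second moment in $\mathbb{H}$. *)

theory Defs
  imports "HOL-Probability.Probability"
begin

definition cond_exp_given :: "'a measure \<Rightarrow> ('a \<Rightarrow> 'b) \<Rightarrow> 'b measure \<Rightarrow> ('a \<Rightarrow> real) \<Rightarrow> ('a \<Rightarrow> real)" where
  "cond_exp_given M X MX f = real_cond_exp M (vimage_algebra (space M) X MX) f"

definition covariance :: "'a measure \<Rightarrow> ('a \<Rightarrow> real) \<Rightarrow> ('a \<Rightarrow> real) \<Rightarrow> real" where
  "covariance M f g = (\<integral>\<omega>. (f \<omega> - (\<integral>x. f x \<partial>M)) * (g \<omega> - (\<integral>x. g x \<partial>M)) \<partial>M)"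

end

theory Submission
  imports Defs
begin

text \<open>
  Because the auxiliary randomness S is independent of (X, A, Y), conditioning on (X, S) is the
  same as conditioning on X, so by the tower property E[T | Z] = E[E[T | X] | Z] for T = A, Y.
  Write f = E[Y | X], h = E[A | X] and let w be E[f | Z] minus its mean. Since E[h | Z] is
  constant, w is orthogonal to h - E h, while its inner product with f - E f equals its own
  squared norm. Hence Var f - Var E[f | Z] is the squared norm of the residual f - E f - w,
  Cov(f, h) is the inner product of this residual with h - E h, and Cauchy-Schwarz gives the bound.
\<close>

lemma integrable_mult_square_integrable:
  fixes f g :: "'a \<Rightarrow> real"
  assumes [measurable]: "f \<in> borel_measurable M" "g \<in> borel_measurable M"
    and "integrable M (\<lambda>x. (f x)\<^sup>2)" "integrable M (\<lambda>x. (g x)\<^sup>2)"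
  shows "integrable M (\<lambda>x. f x * g x)"
proof (rule Bochner_Integration.integrable_bound)
  show "integrable M (\<lambda>x. (f x)\<^sup>2 + (g x)\<^sup>2)"
    using assms by simp
  show "AE x in M. norm (f x * g x) \<le> norm ((f x)\<^sup>2 + (g x)\<^sup>2)"
  proof (rule AE_I2)
    fix x
    have "norm (f x * g x) \<le> 2 * \<bar>f x\<bar> * \<bar>g x\<bar>"
      by (simp add: abs_mult)
    also have "\<dots> \<le> (f x)\<^sup>2 + (g x)\<^sup>2"
      using sum_squares_bound[of "\<bar>f x\<bar>" "\<bar>g x\<bar>"] by simp
    finally show "norm (f x * g x) \<le> norm ((f x)\<^sup>2 + (g x)\<^sup>2)"
      by simp
  qed
qed simp

lemma (in finite_measure) integrable_square_diff_const:
  fixes f :: "'a \<Rightarrow> real"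
  assumes [measurable]: "f \<in> borel_measurable M" and "integrable M (\<lambda>x. (f x)\<^sup>2)"
  shows "integrable M (\<lambda>x. (f x - c)\<^sup>2)"
proof -
  have "integrable M f"
    using square_integrable_imp_integrable assms by blast
  moreover have "(\<lambda>x. (f x - c)\<^sup>2) = (\<lambda>x. (f x)\<^sup>2 - 2 * c * f x + c\<^sup>2)"
    by (simp add: power2_eq_square algebra_simps)
  ultimately show ?thesis
    using assms by simp
qed

lemma (in sigma_finite_subalgebra) integrable_square_real_cond_exp:
  fixes f :: "'a \<Rightarrow> real"
  assumes "integrable M f" "integrable M (\<lambda>x. (f x)\<^sup>2)"
  shows "integrable M (\<lambda>x. (real_cond_exp M F f x)\<^sup>2)"
  using integrable_convex_cond_exp[of f UNIV 0 0 power2] assms convex_power2 by auto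

lemma Cauchy_Schwarz_integral:
  fixes f g :: "'a \<Rightarrow> real"
  assumes [measurable]: "f \<in> borel_measurable M" "g \<in> borel_measurable M"
    and f2: "integrable M (\<lambda>x. (f x)\<^sup>2)" and g2: "integrable M (\<lambda>x. (g x)\<^sup>2)"
  shows "(\<integral>x. f x * g x \<partial>M)\<^sup>2 / (\<integral>x. (g x)\<^sup>2 \<partial>M) \<le> (\<integral>x. (f x)\<^sup>2 \<partial>M)"
proof (cases "(\<integral>x. (g x)\<^sup>2 \<partial>M) = 0")
  case False
  define c where "c = (\<integral>x. f x * g x \<partial>M) / (\<integral>x. (g x)\<^sup>2 \<partial>M)"
  have fg: "integrable M (\<lambda>x. f x * g x)"
    using f2 g2 by (rule integrable_mult_square_integrable[rotated 2]) simp_all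
  have "0 \<le> (\<integral>x. (f x - c * g x)\<^sup>2 \<partial>M)"
    by simp
  also have "\<dots> = (\<integral>x. (f x)\<^sup>2 - 2 * c * (f x * g x) + c\<^sup>2 * (g x)\<^sup>2 \<partial>M)"
    by (simp add: power2_eq_square algebra_simps)
  also have "\<dots> = (\<integral>x. (f x)\<^sup>2 \<partial>M) - 2 * c * (\<integral>x. f x * g x \<partial>M) + c\<^sup>2 * (\<integral>x. (g x)\<^sup>2 \<partial>M)"
    using f2 g2 fg by simp
  also have "\<dots> = (\<integral>x. (f x)\<^sup>2 \<partial>M) - (\<integral>x. f x * g x \<partial>M)\<^sup>2 / (\<integral>x. (g x)\<^sup>2 \<partial>M)"
    using False by (simp add: c_def power2_eq_square field_simps)
  finally show ?thesis
    by simp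
qed simp

lemma Cauchy_Schwarz_integral_residual:
  fixes u v w :: "'a \<Rightarrow> real"
  assumes [measurable]: "u \<in> borel_measurable M" "v \<in> borel_measurable M" "w \<in> borel_measurable M"
    and u2: "integrable M (\<lambda>x. (u x)\<^sup>2)" and v2: "integrable M (\<lambda>x. (v x)\<^sup>2)"
    and w2: "integrable M (\<lambda>x. (w x)\<^sup>2)"
    and wu: "(\<integral>x. w x * u x \<partial>M) = (\<integral>x. (w x)\<^sup>2 \<partial>M)" and wv: "(\<integral>x. w x * v x \<partial>M) = 0"
  shows "(\<integral>x. u x * v x \<partial>M)\<^sup>2 / (\<integral>x. (v x)\<^sup>2 \<partial>M) \<le> (\<integral>x. (u x)\<^sup>2 \<partial>M) - (\<integral>x. (w x)\<^sup>2 \<partial>M)"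
proof -
  have uv: "integrable M (\<lambda>x. u x * v x)" and uw: "integrable M (\<lambda>x. w x * u x)"
    and vw: "integrable M (\<lambda>x. w x * v x)"
    using u2 v2 w2 by (simp_all add: integrable_mult_square_integrable)
  have square_expand: "(\<lambda>x. (u x - w x)\<^sup>2) = (\<lambda>x. (u x)\<^sup>2 + (w x)\<^sup>2 - 2 * (w x * u x))"
    by (simp add: power2_eq_square algebra_simps)
  then have uw2: "integrable M (\<lambda>x. (u x - w x)\<^sup>2)"
    using u2 w2 uw by simp
  have "(\<integral>x. u x * v x \<partial>M) = (\<integral>x. (u x - w x) * v x \<partial>M)"
    using uv vw wv by (simp add: left_diff_distrib mult.commute[of "w _"])
  moreover have "(\<integral>x. (u x - w x)\<^sup>2 \<partial>M) = (\<integral>x. (u x)\<^sup>2 \<partial>M) - (\<integral>x. (w x)\<^sup>2 \<partial>M)"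
    using u2 w2 uw wu by (simp add: square_expand)
  ultimately show ?thesis
    using Cauchy_Schwarz_integral[of "\<lambda>x. u x - w x" M v] uw2 v2 by simp
qed

lemma (in prob_space) variance_cong_AE:
  fixes f g :: "'a \<Rightarrow> real"
  assumes "AE x in M. f x = g x" and "f \<in> borel_measurable M" "g \<in> borel_measurable M"
  shows "variance f = variance g"
proof -
  have "expectation f = expectation g"
    using assms by (intro integral_cong_AE) auto
  then show ?thesis
    using assms by (intro integral_cong_AE) auto
qed

lemma (in prob_space) variance_eq_0_imp_AE_eq_expectation:
  fixes f :: "'a \<Rightarrow> real"
  assumes [measurable]: "f \<in> borel_measurable M" and "integrable M (\<lambda>x. (f x)\<^sup>2)"
    and "variance f = 0"
  shows "AE x in M. f x = expectation f"
proof -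
  have "AE x in M. (f x - expectation f)\<^sup>2 = 0"
    using assms by (subst integral_nonneg_eq_0_iff_AE[symmetric]) (auto intro: integrable_square_diff_const)
  then show ?thesis
    by auto
qed

lemma (in prob_space) variance_real_cond_exp_le:
  fixes f h :: "'a \<Rightarrow> real"
  assumes "sigma_finite_subalgebra M G"
    and [measurable]: "f \<in> borel_measurable M" "h \<in> borel_measurable M"
    and f2: "integrable M (\<lambda>x. (f x)\<^sup>2)" and h2: "integrable M (\<lambda>x. (h x)\<^sup>2)"
    and h_uninformative: "variance (real_cond_exp M G h) = 0"
  shows "variance (real_cond_exp M G f) \<le> variance f - (covariance M f h)\<^sup>2 / variance h"
proof -
  interpret G: sigma_finite_subalgebra M G by fact
  have fi: "integrable M f" and hi: "integrable M h"
    using f2 h2 by (simp_all add: square_integrable_imp_integrable)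
  define u where "u x = f x - expectation f" for x
  define v where "v x = h x - expectation h" for x
  define w where "w x = real_cond_exp M G f x - expectation f" for x
  have [measurable]: "u \<in> borel_measurable M" "v \<in> borel_measurable M"
    "w \<in> borel_measurable M" "w \<in> borel_measurable G"
    unfolding u_def v_def w_def by simp_all
  have u2: "integrable M (\<lambda>x. (u x)\<^sup>2)" and v2: "integrable M (\<lambda>x. (v x)\<^sup>2)"
    unfolding u_def v_def using f2 h2 by (simp_all add: integrable_square_diff_const)
  have w2: "integrable M (\<lambda>x. (w x)\<^sup>2)"
    unfolding w_def using G.integrable_square_real_cond_exp[OF fi f2]
    by (simp add: integrable_square_diff_const)
  have wi: "integrable M w"
    using w2 by (simp add: square_integrable_imp_integrable)
  have w_mean: "expectation w = 0"
    unfolding w_def using fi by (simp add: G.real_cond_exp_int prob_space)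
  have wf: "integrable M (\<lambda>x. w x * f x)" and wh: "integrable M (\<lambda>x. w x * h x)"
    using f2 h2 w2 by (simp_all add: integrable_mult_square_integrable)
  have "(\<integral>x. w x * u x \<partial>M) = (\<integral>x. w x * f x \<partial>M)"
    unfolding u_def using wf wi w_mean by (simp add: right_diff_distrib)
  also have "\<dots> = (\<integral>x. w x * real_cond_exp M G f x - expectation f * w x \<partial>M)"
    using G.real_cond_exp_intg[OF wf] wi w_mean by simp
  also have "\<dots> = (\<integral>x. (w x)\<^sup>2 \<partial>M)"
    by (simp add: w_def power2_eq_square algebra_simps)
  finally have wu: "(\<integral>x. w x * u x \<partial>M) = (\<integral>x. (w x)\<^sup>2 \<partial>M)" .
  have "AE x in M. real_cond_exp M G h x = expectation h"
    using variance_eq_0_imp_AE_eq_expectation[OF _ G.integrable_square_real_cond_exp[OF hi h2]]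
      h_uninformative hi by (simp add: G.real_cond_exp_int)
  then have "(\<integral>x. w x * real_cond_exp M G h x \<partial>M) = (\<integral>x. w x * expectation h \<partial>M)"
    by (intro integral_cong_AE) auto
  then have "(\<integral>x. w x * h x \<partial>M) = 0"
    using wh w_mean by (simp add: G.real_cond_exp_intg(2))
  then have wv: "(\<integral>x. w x * v x \<partial>M) = 0"
    unfolding v_def using wh wi w_mean by (simp add: right_diff_distrib)
  have "(covariance M f h)\<^sup>2 / variance h \<le> variance f - variance (real_cond_exp M G f)"
    using Cauchy_Schwarz_integral_residual[OF _ _ _ u2 v2 w2 wu wv] fi
    by (simp add: covariance_def u_def v_def w_def G.real_cond_exp_int)
  then show ?thesis
    by simp
qed

lemma (in prob_space) sigma_finite_subalgebra_vimage_algebra: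
  assumes "f \<in> M \<rightarrow>\<^sub>M N"
  shows "sigma_finite_subalgebra M (vimage_algebra (space M) f N)"
proof -
  have "subalgebra M (vimage_algebra (space M) f N)"
    unfolding subalgebra_def using assms by (auto simp: sets_vimage_algebra2 measurable_def)
  then interpret finite_measure_subalgebra M "vimage_algebra (space M) f N"
    by unfold_locales
  show ?thesis ..
qed

lemma (in prob_space) integrable_square_cond_exp_given:
  fixes T :: "'a \<Rightarrow> real"
  assumes "X \<in> M \<rightarrow>\<^sub>M MX" and [measurable]: "T \<in> borel_measurable M"
    and "integrable M (\<lambda>\<omega>. (T \<omega>)\<^sup>2)"
  shows "integrable M (\<lambda>\<omega>. (cond_exp_given M X MX T \<omega>)\<^sup>2)"
proof -
  interpret X: sigma_finite_subalgebra M "vimage_algebra (space M) X MX"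
    using assms(1) by (rule sigma_finite_subalgebra_vimage_algebra)
  show ?thesis
    using assms(3) square_integrable_imp_integrable[OF assms(2,3)]
    by (simp add: cond_exp_given_def X.integrable_square_real_cond_exp)
qed

lemma measurable_vimage_algebra_self:
  assumes "f \<in> M \<rightarrow>\<^sub>M N"
  shows "f \<in> vimage_algebra (space M) f N \<rightarrow>\<^sub>M N"
  using measurable_space[OF assms] by (intro measurable_vimage_algebra1) auto

lemma subalgebra_vimage_algebra_comp:
  assumes "f \<in> \<Omega> \<rightarrow> space N" and "g \<in> N \<rightarrow>\<^sub>M K"
  shows "subalgebra (vimage_algebra \<Omega> f N) (vimage_algebra \<Omega> (\<lambda>\<omega>. g (f \<omega>)) K)"
proof -
  have "(\<lambda>\<omega>. g (f \<omega>)) \<in> vimage_algebra \<Omega> f N \<rightarrow>\<^sub>M K"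
    using measurable_vimage_algebra1[OF assms(1)] assms(2) by (rule measurable_compose)
  then have "sets (vimage_algebra \<Omega> (\<lambda>\<omega>. g (f \<omega>)) K) \<subseteq> sets (vimage_algebra \<Omega> f N)"
    by (rule sets_image_in_sets[rotated]) simp
  then show ?thesis
    by (simp add: subalgebra_def)
qed

lemma (in prob_space) indep_set_vimage_comp:
  assumes indep: "indep_set A {V -` U \<inter> space M | U. U \<in> sets MV}"
    and V: "V \<in> M \<rightarrow>\<^sub>M MV" and p: "p \<in> MV \<rightarrow>\<^sub>M N"
  shows "indep_set A {(\<lambda>\<omega>. p (V \<omega>)) -` U \<inter> space M | U. U \<in> sets N}"
proof -
  have "(\<lambda>\<omega>. p (V \<omega>)) -` U \<inter> space M \<in> {V -` U \<inter> space M | U. U \<in> sets MV}"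
    if "U \<in> sets N" for U
  proof -
    have "(\<lambda>\<omega>. p (V \<omega>)) -` U \<inter> space M = V -` (p -` U \<inter> space MV) \<inter> space M"
      using measurable_space[OF V] by auto
    moreover have "p -` U \<inter> space MV \<in> sets MV"
      using p that by (rule measurable_sets)
    ultimately show ?thesis
      by blast
  qed
  then show ?thesis
    using indep by (auto simp: indep_sets2_eq)
qed

lemma (in prob_space) distr_pair_indep_set:
  assumes [measurable]: "V \<in> M \<rightarrow>\<^sub>M MV" "S \<in> M \<rightarrow>\<^sub>M Ms"
    and indep: "indep_set {S -` U \<inter> space M | U. U \<in> sets Ms} {V -` U \<inter> space M | U. U \<in> sets MV}"
  shows "distr M MV V \<Otimes>\<^sub>M distr M Ms S = distr M (MV \<Otimes>\<^sub>M Ms) (\<lambda>\<omega>. (V \<omega>, S \<omega>))"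
proof -
  interpret PV: prob_space "distr M MV V" by (rule prob_space_distr) simp
  interpret PS: prob_space "distr M Ms S" by (rule prob_space_distr) simp
  show ?thesis
  proof (rule pair_measure_eqI)
    fix B C assume "B \<in> sets (distr M MV V)" "C \<in> sets (distr M Ms S)"
    then have [measurable]: "B \<in> sets MV" "C \<in> sets Ms"
      by simp_all
    have "(\<lambda>\<omega>. (V \<omega>, S \<omega>)) -` (B \<times> C) \<inter> space M = (S -` C \<inter> space M) \<inter> (V -` B \<inter> space M)"
      by auto
    moreover have "prob ((S -` C \<inter> space M) \<inter> (V -` B \<inter> space M))
        = prob (S -` C \<inter> space M) * prob (V -` B \<inter> space M)"
      by (rule indep_setD[OF indep]) auto
    ultimately have "emeasure (distr M (MV \<Otimes>\<^sub>M Ms) (\<lambda>\<omega>. (V \<omega>, S \<omega>))) (B \<times> C)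
        = prob (S -` C \<inter> space M) * prob (V -` B \<inter> space M)"
      by (simp add: emeasure_distr emeasure_eq_measure)
    then show "emeasure (distr M MV V) B * emeasure (distr M Ms S) C
        = emeasure (distr M (MV \<Otimes>\<^sub>M Ms) (\<lambda>\<omega>. (V \<omega>, S \<omega>))) (B \<times> C)"
      by (simp add: emeasure_distr emeasure_eq_measure ennreal_mult' mult.commute)
  next
    show "sets (distr M MV V \<Otimes>\<^sub>M distr M Ms S) = sets (distr M (MV \<Otimes>\<^sub>M Ms) (\<lambda>\<omega>. (V \<omega>, S \<omega>)))"
      by (simp cong: sets_pair_measure_cong)
  qed unfold_locales
qed

lemma (in prob_space) integral_indep_set:
  fixes h :: "_ \<Rightarrow> real"
  assumes [measurable]: "V \<in> M \<rightarrow>\<^sub>M MV" "S \<in> M \<rightarrow>\<^sub>M Ms"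
    and indep: "indep_set {S -` U \<inter> space M | U. U \<in> sets Ms} {V -` U \<inter> space M | U. U \<in> sets MV}"
    and [measurable]: "h \<in> borel_measurable (MV \<Otimes>\<^sub>M Ms)"
    and h_int: "integrable M (\<lambda>\<omega>. h (V \<omega>, S \<omega>))"
  shows "(\<integral>\<omega>. h (V \<omega>, S \<omega>) \<partial>M) = (\<integral>\<omega>. (\<integral>s. h (V \<omega>, s) \<partial>distr M Ms S) \<partial>M)"
proof -
  interpret PV: prob_space "distr M MV V" by (rule prob_space_distr) simp
  interpret PS: prob_space "distr M Ms S" by (rule prob_space_distr) simp
  interpret P: pair_prob_space "distr M MV V" "distr M Ms S" ..
  note joint = distr_pair_indep_set[OF assms(1-3)]
  have h_P: "h \<in> borel_measurable (distr M MV V \<Otimes>\<^sub>M distr M Ms S)"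
    by (simp cong: measurable_cong_sets sets_pair_measure_cong)
  have "(\<integral>\<omega>. h (V \<omega>, S \<omega>) \<partial>M) = integral\<^sup>L (distr M MV V \<Otimes>\<^sub>M distr M Ms S) h"
    unfolding joint by (rule integral_distr[symmetric]) simp_all
  also have "\<dots> = (\<integral>v. (\<integral>s. h (v, s) \<partial>distr M Ms S) \<partial>distr M MV V)"
    using h_int by (intro P.integral_fst'[symmetric]) (simp add: joint integrable_distr_eq)
  also have "\<dots> = (\<integral>\<omega>. (\<integral>s. h (V \<omega>, s) \<partial>distr M Ms S) \<partial>M)"
  proof (rule integral_distr)
    have "(\<lambda>v. \<integral>s. h (v, s) \<partial>distr M Ms S) \<in> borel_measurable (distr M MV V)"
      using h_P by (intro PS.borel_measurable_lebesgue_integral) simp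
    then show "(\<lambda>v. \<integral>s. h (v, s) \<partial>distr M Ms S) \<in> borel_measurable MV"
      by (simp cong: measurable_cong_sets)
  qed simp
  finally show ?thesis .
qed

lemma (in prob_space) integral_indicator_indep_set:
  fixes q :: "_ \<Rightarrow> real"
  assumes [measurable]: "V \<in> M \<rightarrow>\<^sub>M MV" "S \<in> M \<rightarrow>\<^sub>M Ms" "p \<in> MV \<rightarrow>\<^sub>M MX" "q \<in> borel_measurable MV"
    and indep: "indep_set {S -` U \<inter> space M | U. U \<in> sets Ms} {V -` U \<inter> space M | U. U \<in> sets MV}"
    and q_int: "integrable M (\<lambda>\<omega>. q (V \<omega>))"
    and [measurable]: "C \<in> sets (MX \<Otimes>\<^sub>M Ms)"
  shows "(\<integral>\<omega>. indicator C (p (V \<omega>), S \<omega>) * q (V \<omega>) \<partial>M)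
    = (\<integral>\<omega>. (\<integral>s. indicator C (p (V \<omega>), s) \<partial>distr M Ms S) * q (V \<omega>) \<partial>M)"
proof -
  have h_meas: "(\<lambda>(v, s). indicator C (p v, s) * q v) \<in> borel_measurable (MV \<Otimes>\<^sub>M Ms)"
    by measurable
  have "integrable M (\<lambda>\<omega>. indicator C (p (V \<omega>), S \<omega>) * q (V \<omega>))"
    using q_int by (rule Bochner_Integration.integrable_bound) (auto simp: indicator_def)
  then show ?thesis
    using integral_indep_set[OF assms(1,2) indep h_meas] by simp
qed

lemma (in prob_space) integral_indicator_Pair_mult_indep:
  fixes T :: "'a \<Rightarrow> real"
  assumes [measurable]: "X \<in> M \<rightarrow>\<^sub>M MX" "T \<in> borel_measurable M" "F \<in> borel_measurable MX"
    and [measurable]: "S \<in> M \<rightarrow>\<^sub>M Ms"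
    and indep: "indep_set {S -` U \<inter> space M | U. U \<in> sets Ms}
      {(\<lambda>\<omega>. (X \<omega>, T \<omega>)) -` U \<inter> space M | U. U \<in> sets (MX \<Otimes>\<^sub>M borel)}"
    and T_int: "integrable M T"
    and F: "AE \<omega> in M. cond_exp_given M X MX T \<omega> = F (X \<omega>)"
    and [measurable]: "C \<in> sets (MX \<Otimes>\<^sub>M Ms)"
  shows "(\<integral>\<omega>. indicator C (X \<omega>, S \<omega>) * T \<omega> \<partial>M) = (\<integral>\<omega>. indicator C (X \<omega>, S \<omega>) * F (X \<omega>) \<partial>M)"
proof -
  interpret X: sigma_finite_subalgebra M "vimage_algebra (space M) X MX"
    by (rule sigma_finite_subalgebra_vimage_algebra) simp
  interpret PS: prob_space "distr M Ms S" by (rule prob_space_distr) simp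
  have XT: "(\<lambda>\<omega>. (X \<omega>, T \<omega>)) \<in> M \<rightarrow>\<^sub>M MX \<Otimes>\<^sub>M borel"
    by simp
  define k :: "_ \<Rightarrow> real" where "k x = (\<integral>s. indicator C (x, s) \<partial>distr M Ms S)" for x
  have k_le_1: "\<bar>k x\<bar> \<le> 1" for x
  proof -
    have "(\<lambda>s. indicator C (x, s) :: real) = indicator (Pair x -` C)"
      by (auto simp: indicator_def)
    then show ?thesis
      using PS.prob_le_1 by (simp add: k_def)
  qed
  have "(indicator C :: _ \<Rightarrow> real) \<in> borel_measurable (MX \<Otimes>\<^sub>M distr M Ms S)"
    by (simp cong: measurable_cong_sets sets_pair_measure_cong)
  then have [measurable]: "k \<in> borel_measurable MX"
    unfolding k_def by (intro PS.borel_measurable_lebesgue_integral) (simp add: case_prod_beta')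
  have kX: "(\<lambda>\<omega>. k (X \<omega>)) \<in> borel_measurable (vimage_algebra (space M) X MX)"
    by (intro measurable_compose[of X _ MX k] measurable_vimage_algebra_self) simp_all
  have kXT_int: "integrable M (\<lambda>\<omega>. k (X \<omega>) * T \<omega>)"
    using T_int by (rule Bochner_Integration.integrable_bound)
      (auto simp: abs_mult intro!: mult_left_le_one_le k_le_1)
  have FX_int: "integrable M (\<lambda>\<omega>. F (X \<omega>))"
    using integrable_cong_AE_imp[OF X.real_cond_exp_int(1)[OF T_int] _ F[unfolded cond_exp_given_def]]
    by simp
  \<comment> \<open>Integrating out S leaves the weight k (X), which is X-measurable, so T may be
    replaced by E[T | X] against it.\<close>
  have "(\<integral>\<omega>. indicator C (X \<omega>, S \<omega>) * T \<omega> \<partial>M) = (\<integral>\<omega>. k (X \<omega>) * T \<omega> \<partial>M)"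
    using integral_indicator_indep_set[OF XT _ measurable_fst measurable_snd indep _ \<open>C \<in> _\<close>] T_int
    by (simp add: k_def)
  also have "\<dots> = (\<integral>\<omega>. k (X \<omega>) * cond_exp_given M X MX T \<omega> \<partial>M)"
    using kXT_int kX by (simp add: X.real_cond_exp_intg(2) cond_exp_given_def)
  also have "\<dots> = (\<integral>\<omega>. k (X \<omega>) * F (X \<omega>) \<partial>M)"
    using F by (intro integral_cong_AE) (auto simp: cond_exp_given_def)
  also have "\<dots> = (\<integral>\<omega>. indicator C (X \<omega>, S \<omega>) * F (X \<omega>) \<partial>M)"
    using integral_indicator_indep_set[OF XT _ measurable_fst _ indep _ \<open>C \<in> _\<close>, of "\<lambda>v. F (fst v)"] FX_int
    by (simp add: k_def)
  finally show ?thesis .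
qed

lemma (in prob_space) cond_exp_given_Pair_indep:
  fixes T :: "'a \<Rightarrow> real"
  assumes [measurable]: "X \<in> M \<rightarrow>\<^sub>M MX" "T \<in> borel_measurable M" "F \<in> borel_measurable MX"
    and [measurable]: "S \<in> M \<rightarrow>\<^sub>M Ms"
    and indep: "indep_set {S -` U \<inter> space M | U. U \<in> sets Ms}
      {(\<lambda>\<omega>. (X \<omega>, T \<omega>)) -` U \<inter> space M | U. U \<in> sets (MX \<Otimes>\<^sub>M borel)}"
    and T_int: "integrable M T"
    and F: "AE \<omega> in M. cond_exp_given M X MX T \<omega> = F (X \<omega>)"
  shows "AE \<omega> in M. cond_exp_given M (\<lambda>\<omega>. (X \<omega>, S \<omega>)) (MX \<Otimes>\<^sub>M Ms) T \<omega> = cond_exp_given M X MX T \<omega>"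
proof -
  let ?XS = "vimage_algebra (space M) (\<lambda>\<omega>. (X \<omega>, S \<omega>)) (MX \<Otimes>\<^sub>M Ms)"
  interpret X: sigma_finite_subalgebra M "vimage_algebra (space M) X MX"
    by (rule sigma_finite_subalgebra_vimage_algebra) simp
  interpret XS: sigma_finite_subalgebra M ?XS
    by (rule sigma_finite_subalgebra_vimage_algebra) simp
  have XS_meas: "(\<lambda>\<omega>. (X \<omega>, S \<omega>)) \<in> ?XS \<rightarrow>\<^sub>M MX \<Otimes>\<^sub>M Ms"
    by (rule measurable_vimage_algebra_self) simp
  have "AE \<omega> in M. real_cond_exp M ?XS T \<omega> = F (X \<omega>)"
  proof (rule XS.real_cond_exp_charact)
    fix D assume "D \<in> sets ?XS"
    then obtain C where [measurable]: "C \<in> sets (MX \<Otimes>\<^sub>M Ms)"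
      and D: "D = (\<lambda>\<omega>. (X \<omega>, S \<omega>)) -` C \<inter> space M"
      using measurable_space[of "\<lambda>\<omega>. (X \<omega>, S \<omega>)" M "MX \<Otimes>\<^sub>M Ms"]
      by (auto simp: sets_vimage_algebra2)
    have D_indicator: "indicator D \<omega> = indicator C (X \<omega>, S \<omega>)" if "\<omega> \<in> space M" for \<omega>
      using that by (simp add: D indicator_def)
    have "(\<integral>\<omega>\<in>D. T \<omega> \<partial>M) = (\<integral>\<omega>. indicator C (X \<omega>, S \<omega>) * T \<omega> \<partial>M)"
      unfolding set_lebesgue_integral_def by (rule Bochner_Integration.integral_cong) (simp_all add: D_indicator)
    also have "\<dots> = (\<integral>\<omega>. indicator C (X \<omega>, S \<omega>) * F (X \<omega>) \<partial>M)"
      by (rule integral_indicator_Pair_mult_indep[OF assms]) simp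
    also have "\<dots> = (\<integral>\<omega>\<in>D. F (X \<omega>) \<partial>M)"
      unfolding set_lebesgue_integral_def by (rule Bochner_Integration.integral_cong) (simp_all add: D_indicator)
    finally show "(\<integral>\<omega>\<in>D. T \<omega> \<partial>M) = (\<integral>\<omega>\<in>D. F (X \<omega>) \<partial>M)" .
  next
    show "integrable M (\<lambda>\<omega>. F (X \<omega>))"
      using integrable_cong_AE_imp[OF X.real_cond_exp_int(1)[OF T_int] _ F[unfolded cond_exp_given_def]]
      by simp
    show "(\<lambda>\<omega>. F (X \<omega>)) \<in> borel_measurable ?XS"
      using measurable_compose[OF XS_meas measurable_comp[OF measurable_fst assms(3)]] by simp
  qed (rule T_int)
  then show ?thesis
    using F by (auto simp: cond_exp_given_def)
qed

lemma (in prob_space) cond_exp_given_comp_Pair_indep: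
  fixes T :: "'a \<Rightarrow> real"
  assumes [measurable]: "X \<in> M \<rightarrow>\<^sub>M MX" "T \<in> borel_measurable M" "F \<in> borel_measurable MX"
    and [measurable]: "S \<in> M \<rightarrow>\<^sub>M Ms"
    and indep: "indep_set {S -` U \<inter> space M | U. U \<in> sets Ms}
      {(\<lambda>\<omega>. (X \<omega>, T \<omega>)) -` U \<inter> space M | U. U \<in> sets (MX \<Otimes>\<^sub>M borel)}"
    and T_int: "integrable M T"
    and F: "AE \<omega> in M. cond_exp_given M X MX T \<omega> = F (X \<omega>)"
    and [measurable]: "g \<in> MX \<Otimes>\<^sub>M Ms \<rightarrow>\<^sub>M MZ"
  shows "AE \<omega> in M. cond_exp_given M (\<lambda>\<omega>. g (X \<omega>, S \<omega>)) MZ T \<omega>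
    = cond_exp_given M (\<lambda>\<omega>. g (X \<omega>, S \<omega>)) MZ (cond_exp_given M X MX T) \<omega>"
proof -
  let ?XS = "vimage_algebra (space M) (\<lambda>\<omega>. (X \<omega>, S \<omega>)) (MX \<Otimes>\<^sub>M Ms)"
  let ?Z = "vimage_algebra (space M) (\<lambda>\<omega>. g (X \<omega>, S \<omega>)) MZ"
  interpret XS: sigma_finite_subalgebra M ?XS
    by (rule sigma_finite_subalgebra_vimage_algebra) simp
  interpret Z: sigma_finite_subalgebra M ?Z
    by (rule sigma_finite_subalgebra_vimage_algebra) simp
  have "subalgebra ?XS ?Z"
    using measurable_space[of "\<lambda>\<omega>. (X \<omega>, S \<omega>)" M "MX \<Otimes>\<^sub>M Ms"]
    by (intro subalgebra_vimage_algebra_comp[where g=g]) auto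
  then have "AE \<omega> in M. real_cond_exp M ?Z (real_cond_exp M ?XS T) \<omega> = real_cond_exp M ?Z T \<omega>"
    by (rule Z.real_cond_exp_nested_subalg[OF XS.subalg _ T_int])
  moreover have "AE \<omega> in M. real_cond_exp M ?Z (real_cond_exp M ?XS T) \<omega>
      = real_cond_exp M ?Z (cond_exp_given M X MX T) \<omega>"
    using cond_exp_given_Pair_indep[OF assms(1-7)] unfolding cond_exp_given_def
    by (rule Z.real_cond_exp_cong) simp_all
  ultimately show ?thesis
    unfolding cond_exp_given_def by auto
qed

theorem theorem9:
  fixes M :: "'w measure"
    and MX :: "'x measure" and MS :: "'s measure" and MZ :: "'z measure"
    and X :: "'w \<Rightarrow> 'x" and A Y :: "'w \<Rightarrow> real"
    and S :: "'w \<Rightarrow> 's" and g :: "'x \<times> 's \<Rightarrow> 'z"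
    and phi :: "'x \<Rightarrow> 'h::{real_inner, complete_space}"
    and a y :: 'h
  assumes "prob_space M"
    and "X \<in> M \<rightarrow>\<^sub>M MX"
    and "A \<in> borel_measurable M" and "Y \<in> borel_measurable M"
    and "integrable M (\<lambda>\<omega>. (A \<omega>)\<^sup>2)" and "integrable M (\<lambda>\<omega>. (Y \<omega>)\<^sup>2)"
    and "phi \<in> borel_measurable MX"
    and "integrable M (\<lambda>\<omega>. (norm (phi (X \<omega>)))\<^sup>2)"
    and "AE \<omega> in M. cond_exp_given M X MX Y \<omega> = inner y (phi (X \<omega>))"
    and "AE \<omega> in M. cond_exp_given M X MX A \<omega> = inner a (phi (X \<omega>))"
    and "prob_space.variance M (cond_exp_given M X MX A) > 0"
    and "S \<in> M \<rightarrow>\<^sub>M MS"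
    and "g \<in> (MX \<Otimes>\<^sub>M MS) \<rightarrow>\<^sub>M MZ"
    and "prob_space.indep_set M {S -` B \<inter> space M | B. B \<in> sets MS}
           {(\<lambda>\<omega>. (X \<omega>, A \<omega>, Y \<omega>)) -` B \<inter> space M | B. B \<in> sets (MX \<Otimes>\<^sub>M (borel \<Otimes>\<^sub>M borel))}"
    and "prob_space.variance M (cond_exp_given M (\<lambda>\<omega>. g (X \<omega>, S \<omega>)) MZ A) = 0"
  shows "prob_space.variance M (cond_exp_given M (\<lambda>\<omega>. g (X \<omega>, S \<omega>)) MZ Y)
     \<le> prob_space.variance M (cond_exp_given M X MX Y)
        - (covariance M (cond_exp_given M X MX Y) (cond_exp_given M X MX A))\<^sup>2
          / prob_space.variance M (cond_exp_given M X MX A)"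
proof -
  interpret prob_space M by fact
  note [measurable] = assms(2-4,7,12,13)
  let ?E_Z = "cond_exp_given M (\<lambda>\<omega>. g (X \<omega>, S \<omega>)) MZ"
  have indep_A: "indep_set {S -` U \<inter> space M | U. U \<in> sets MS}
      {(\<lambda>\<omega>. (X \<omega>, A \<omega>)) -` U \<inter> space M | U. U \<in> sets (MX \<Otimes>\<^sub>M borel)}"
    using indep_set_vimage_comp[OF assms(14), of "\<lambda>(x, a, y). (x, a)"] by simp
  have indep_Y: "indep_set {S -` U \<inter> space M | U. U \<in> sets MS}
      {(\<lambda>\<omega>. (X \<omega>, Y \<omega>)) -` U \<inter> space M | U. U \<in> sets (MX \<Otimes>\<^sub>M borel)}"
    using indep_set_vimage_comp[OF assms(14), of "\<lambda>(x, a, y). (x, y)"] by simp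
  \<comment> \<open>The kernel representation is used only to exhibit E[A|X] and E[Y|X] as measurable
    functions of X.\<close>
  have inner_phi: "(\<lambda>x. inner v (phi x)) \<in> borel_measurable MX" for v
    by (rule borel_measurable_continuous_on[rotated, OF assms(7)]) (intro continuous_intros)
  have "variance (?E_Z (cond_exp_given M X MX A)) = 0"
    using cond_exp_given_comp_Pair_indep[OF assms(2,3) inner_phi assms(12) indep_A
        square_integrable_imp_integrable[OF assms(3,5)] assms(10,13)]
      assms(15) by (simp add: variance_cong_AE cond_exp_given_def)
  moreover have "variance (?E_Z Y) = variance (?E_Z (cond_exp_given M X MX Y))"
    using cond_exp_given_comp_Pair_indep[OF assms(2,4) inner_phi assms(12) indep_Y
        square_integrable_imp_integrable[OF assms(4,6)] assms(9,13)]
    by (rule variance_cong_AE) (simp_all add: cond_exp_given_def)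
  moreover have "sigma_finite_subalgebra M (vimage_algebra (space M) (\<lambda>\<omega>. g (X \<omega>, S \<omega>)) MZ)"
    by (rule sigma_finite_subalgebra_vimage_algebra) simp
  ultimately show ?thesis
    using variance_real_cond_exp_le[of "vimage_algebra (space M) (\<lambda>\<omega>. g (X \<omega>, S \<omega>)) MZ"
        "cond_exp_given M X MX Y" "cond_exp_given M X MX A"]
      integrable_square_cond_exp_given[OF assms(2,3,5)] integrable_square_cond_exp_given[OF assms(2,4,6)]
    by (simp add: cond_exp_given_def)
qed

end
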